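(* Let $\theta>0$, $\beta>1$, $g,h,m\ge0$, let $T$ be a positive integer, and let $c$ be the constant defined in the context. For integers $s<T$ and $a\ge0$, let $t_{(s,a)}\in\{s+1,\ldots,T+1\}$ be a minimizer of $t\mapsto f_{(s,a)}(t)$ over $\{s+1,\ldots,T+1\}$. Let $\delta\ge1$ be an integer such that $s+\delta<t_{(s,a)}\le T$. Then $t_{(s,a)}$ is also a minimizer of $t\mapsto f_{(s+\delta,a+\delta)}(t)$ over $\{s+\delta+1,\ldots,T+1\}$; that is, $t_{(s+\delta,a+\delta)}=t_{(s,a)}$.
   Context: $L$ has the discrete Weibull distribution: $\mathrm{P}(L>k)=e^{-\theta k^\beta}$ for $k=0,1,2,\ldots$. For integer $t\ge1$, $$q_t=\frac{(1-e^{-\theta t^\beta})g+e^{-\theta t^\beta}(h+mt)}{\sum_{k=1}^t (e^{-\theta (k-1)^\beta}-e^{-\theta k^\beta})k+e^{-\theta t^\beta}t},\qquad c=\min_{t\ge1}q_t$$ (assumed attained). For an integer age $a\ge0$, $L_a$ denotes a random variable distributed as $L-a$ conditionally on $L>a$, so $\mathrm{P}(L_a>k)=\exp\{\theta(a^\beta-(a+k)^\beta)\}$ for $k\ge0$. For integers $s<T$, $a\ge0$, the total maintenance cost over the planning period $\{s,\ldots,T\}$ when the next preventive maintenance is planned at time $t$ and the failure occurs at time $u$ is $$Q_{(s,a)}(t,u)=[g+(T-u)c]\,1_{\{u\le t\}}+[h+(t-s+a)m+(T-t)c]\,1_{\{u>t\}}\quad (t\in\{s+1,\ldots,T\}),$$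 $$Q_{(s,a)}(T+1,u)=[g+(T-u)c]\,1_{\{u\le T\}}$$ ($t=T+1$ means no preventive maintenance is planned). The objective is $f_{(s,a)}(t)=\mathrm{E}\big[Q_{(s,a)}(t,s+L_a)\big]$ for $t\in\{s+1,\ldots,T+1\}$ (equivalently, a PM plan is a binary vector $(x_{s+1},\ldots,x_{T+1})$ with exactly one entry equal to $1$, at position $t$), and $f^*_{(s,a)}=\min_{t\in\{s+1,\ldots,T+1\}}f_{(s,a)}(t)$, with $t_{(s,a)}$ denoting a minimizer. *)

theory Defs
  imports Complex_Main
begin

text \<open>Survival function of the discrete Weibull lifetime L: P(L > k) = exp(-theta k^beta).\<close>
definition surv :: "real \<Rightarrow> real \<Rightarrow> nat \<Rightarrow> real" where
  "surv \<theta> \<beta> k = exp (- \<theta> * (real k powr \<beta>))"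

definition qrate :: "real \<Rightarrow> real \<Rightarrow> real \<Rightarrow> real \<Rightarrow> real \<Rightarrow> nat \<Rightarrow> real" where
  "qrate \<theta> \<beta> g h m t =
     ((1 - surv \<theta> \<beta> t) * g + surv \<theta> \<beta> t * (h + m * real t)) /
     ((\<Sum>k = 1..t. (surv \<theta> \<beta> (k - 1) - surv \<theta> \<beta> k) * real k) + surv \<theta> \<beta> t * real t)"

text \<open>c = min over t \<ge> 1 of q_t (as an infimum; attainment is assumed in the theorem).\<close>
definition cconst :: "real \<Rightarrow> real \<Rightarrow> real \<Rightarrow> real \<Rightarrow> real \<Rightarrow> real" where
  "cconst \<theta> \<beta> g h m = Inf (qrate \<theta> \<beta> g h m ` {1..})"

text \<open>Survival function of the residual life L_a: P(L_a > k) = exp(theta (a^beta - (a+k)^beta)).\<close>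
definition survA :: "real \<Rightarrow> real \<Rightarrow> nat \<Rightarrow> nat \<Rightarrow> real" where
  "survA \<theta> \<beta> a k = exp (\<theta> * (real a powr \<beta> - real (a + k) powr \<beta>))"

text \<open>Probability mass function of L_a: P(L_a = k) (zero at k = 0 since P(L_a > 0) = 1).\<close>
definition pmfA :: "real \<Rightarrow> real \<Rightarrow> nat \<Rightarrow> nat \<Rightarrow> real" where
  "pmfA \<theta> \<beta> a k = (if k = 0 then 0 else survA \<theta> \<beta> a (k - 1) - survA \<theta> \<beta> a k)"

text \<open>Total cost Q_(s,a)(t,u); t = T+1 means no preventive maintenance is planned.\<close>
definition Qcost :: "real \<Rightarrow> real \<Rightarrow> real \<Rightarrow> real \<Rightarrow> int \<Rightarrow> int \<Rightarrow> nat \<Rightarrow> int \<Rightarrow> int \<Rightarrow> real" where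
  "Qcost g h m c T s a t u =
     (if t = T + 1 then (if u \<le> T then g + real_of_int (T - u) * c else 0)
      else (if u \<le> t then g + real_of_int (T - u) * c
            else h + real_of_int (t - s + int a) * m + real_of_int (T - t) * c))"

definition fobj :: "real \<Rightarrow> real \<Rightarrow> real \<Rightarrow> real \<Rightarrow> real \<Rightarrow> int \<Rightarrow> int \<Rightarrow> nat \<Rightarrow> int \<Rightarrow> real" where
  "fobj \<theta> \<beta> g h m T s a t =
     (\<Sum>k. pmfA \<theta> \<beta> a k * Qcost g h m (cconst \<theta> \<beta> g h m) T s a t (s + int k))"

definition is_minimizer_on :: "('a \<Rightarrow> real) \<Rightarrow> 'a set \<Rightarrow> 'a \<Rightarrow> bool" where
  "is_minimizer_on f A x \<longleftrightarrow> x \<in> A \<and> (\<forall>y\<in>A. f x \<le> f y)"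

end

theory Submission
  imports Defs
begin

text \<open>Conditioning on the event \<open>L\<^sub>a > \<delta>\<close>: failures at times up to \<open>s + \<delta>\<close> cost the
  same under every plan \<open>t > s + \<delta>\<close>, and given \<open>L\<^sub>a > \<delta>\<close> the residual life \<open>L\<^sub>a - \<delta>\<close> is
  distributed as \<open>L\<^bsub>a+\<delta>\<^esub>\<close>. Hence on \<open>{s+\<delta>+1..T+1}\<close> the objective \<open>f\<^bsub>(s,a)\<^esub>\<close> equals
  \<open>P(L\<^sub>a > \<delta>) \<cdot> f\<^bsub>(s+\<delta>,a+\<delta>)\<^esub> + const\<close>, a positive affine image, and so has the same minimizers.\<close>

lemma decseq_survA:
  assumes "\<theta> \<ge> 0" "\<beta> \<ge> 0"
  shows "decseq (survA \<theta> \<beta> a)"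
proof (rule decseq_SucI)
  fix n
  have "real (a + n) powr \<beta> \<le> real (a + Suc n) powr \<beta>"
    using assms by (intro powr_mono2) auto
  then show "survA \<theta> \<beta> a (Suc n) \<le> survA \<theta> \<beta> a n"
    unfolding survA_def using assms by (simp add: mult_left_mono)
qed

lemma summable_pmfA:
  assumes "\<theta> \<ge> 0" "\<beta> \<ge> 0"
  shows "summable (pmfA \<theta> \<beta> a)"
proof -
  obtain L where "survA \<theta> \<beta> a \<longlonglongrightarrow> L"
    using decseq_convergent[OF decseq_survA[OF assms, of a], of 0]
    unfolding survA_def by auto
  then have "summable (\<lambda>n. survA \<theta> \<beta> a n - survA \<theta> \<beta> a (Suc n))"
    by (rule telescope_summable')
  then have "summable (\<lambda>n. pmfA \<theta> \<beta> a (Suc n))"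
    by (simp add: pmfA_def)
  then show ?thesis
    by (simp add: summable_Suc_iff)
qed

lemma summable_pmfA_Qcost:
  assumes "\<theta> \<ge> 0" "\<beta> \<ge> 0"
  shows "summable (\<lambda>k. pmfA \<theta> \<beta> a k * Qcost g h m c T s a t (s + int k))"
proof -
  define K where
    "K = (if t = T + 1 then 0 else h + real_of_int (t - s + int a) * m + real_of_int (T - t) * c)"
  have "eventually (\<lambda>k. pmfA \<theta> \<beta> a k * Qcost g h m c T s a t (s + int k) = pmfA \<theta> \<beta> a k * K)
          sequentially"
    unfolding eventually_sequentially
    by (rule exI[of _ "nat (\<bar>T - s\<bar> + \<bar>t - s\<bar>) + 1"]) (auto simp: Qcost_def K_def)
  from summable_cong[OF this] show ?thesis
    using summable_mult2[OF summable_pmfA[OF assms]] by simp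
qed

lemma survA_add:
  "survA \<theta> \<beta> a (j + \<delta>) = survA \<theta> \<beta> a \<delta> * survA \<theta> \<beta> (a + \<delta>) j"
  unfolding survA_def by (simp add: exp_add[symmetric] algebra_simps)

lemma pmfA_add_Suc:
  "pmfA \<theta> \<beta> a (j + Suc \<delta>) = survA \<theta> \<beta> a \<delta> * pmfA \<theta> \<beta> (a + \<delta>) (Suc j)"
  using survA_add[of \<theta> \<beta> a j \<delta>] survA_add[of \<theta> \<beta> a "Suc j" \<delta>]
  by (simp add: pmfA_def algebra_simps)

lemma fobj_eq_survA_mult_fobj_shift:
  fixes s T t :: int and a \<delta> :: nat
  assumes "\<theta> \<ge> 0" "\<beta> \<ge> 0" "s + int \<delta> < t" "t \<le> T + 1" "s + int \<delta> \<le> T"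
  shows "fobj \<theta> \<beta> g h m T s a t =
    survA \<theta> \<beta> a \<delta> * fobj \<theta> \<beta> g h m T (s + int \<delta>) (a + \<delta>) t
    + (\<Sum>k<Suc \<delta>. pmfA \<theta> \<beta> a k * (g + real_of_int (T - (s + int k)) * cconst \<theta> \<beta> g h m))"
proof -
  define c where "c = cconst \<theta> \<beta> g h m"
  define F where "F = (\<lambda>k. pmfA \<theta> \<beta> a k * Qcost g h m c T s a t (s + int k))"
  define G where
    "G = (\<lambda>k. pmfA \<theta> \<beta> (a + \<delta>) k * Qcost g h m c T (s + int \<delta>) (a + \<delta>) t (s + int \<delta> + int k))"
  have "summable F" "summable G"
    unfolding F_def G_def using summable_pmfA_Qcost[OF assms(1,2)] by blast+
  have F_tail: "F (j + Suc \<delta>) = survA \<theta> \<beta> a \<delta> * G (Suc j)" for j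
  proof -
    have "Qcost g h m c T s a t (s + int (j + Suc \<delta>))
        = Qcost g h m c T (s + int \<delta>) (a + \<delta>) t (s + int \<delta> + int (Suc j))"
      unfolding Qcost_def by (simp add: algebra_simps)
    then show ?thesis
      unfolding F_def G_def pmfA_add_Suc by simp
  qed
  have F_head: "F k = pmfA \<theta> \<beta> a k * (g + real_of_int (T - (s + int k)) * c)" if "k < Suc \<delta>" for k
    using that assms(3-5) unfolding F_def Qcost_def by auto
  have "fobj \<theta> \<beta> g h m T s a t = suminf F"
    unfolding fobj_def F_def c_def ..
  also have "\<dots> = (\<Sum>j. F (j + Suc \<delta>)) + (\<Sum>k<Suc \<delta>. F k)"
    by (rule suminf_split_initial_segment[OF \<open>summable F\<close>])
  also have "(\<Sum>j. F (j + Suc \<delta>)) = survA \<theta> \<beta> a \<delta> * (\<Sum>j. G (Suc j))"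
    unfolding F_tail by (rule suminf_mult) (use \<open>summable G\<close> summable_Suc_iff in auto)
  also have "(\<Sum>j. G (Suc j)) = fobj \<theta> \<beta> g h m T (s + int \<delta>) (a + \<delta>) t"
    using suminf_split_head[OF \<open>summable G\<close>] by (simp add: G_def pmfA_def fobj_def c_def)
  also have "(\<Sum>k<Suc \<delta>. F k) = (\<Sum>k<Suc \<delta>. pmfA \<theta> \<beta> a k * (g + real_of_int (T - (s + int k)) * c))"
    by (rule sum.cong) (auto simp: F_head)
  finally show ?thesis
    unfolding c_def .
qed

lemma is_minimizer_on_affine_subset:
  assumes "is_minimizer_on f A x" "B \<subseteq> A" "x \<in> B" "p > 0"
    and "\<And>y. y \<in> B \<Longrightarrow> f y = p * f' y + r"
  shows "is_minimizer_on f' B x"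
proof -
  have "f' x \<le> f' y" if "y \<in> B" for y
  proof -
    have "p * f' x + r \<le> p * f' y + r"
      using assms that unfolding is_minimizer_on_def by (metis subsetD)
    then show ?thesis
      using \<open>p > 0\<close> by simp
  qed
  then show ?thesis
    using \<open>x \<in> B\<close> unfolding is_minimizer_on_def by blast
qed

text \<open>Only \<open>\<theta>, \<beta> \<ge> 0\<close> and \<open>s + \<delta> < t \<le> T\<close> are needed: \<open>c\<close> enters merely as a constant,
  so neither the sign conditions on \<open>g, h, m\<close> nor the attainment of \<open>c\<close> play a role.\<close>

theorem proposition2:
  fixes \<theta> \<beta> g h m :: real and T s t :: int and a \<delta> :: nat
  assumes "\<theta> > 0" and "\<beta> > 1" and "g \<ge> 0" and "h \<ge> 0" and "m \<ge> 0"
    and "T \<ge> 1"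
    and "\<exists>t0::nat. t0 \<ge> 1 \<and> (\<forall>t'::nat. t' \<ge> 1 \<longrightarrow> qrate \<theta> \<beta> g h m t0 \<le> qrate \<theta> \<beta> g h m t')"
    and "s < T"
    and "is_minimizer_on (fobj \<theta> \<beta> g h m T s a) {s + 1..T + 1} t"
    and "\<delta> \<ge> 1" and "s + int \<delta> < t" and "t \<le> T"
  shows "is_minimizer_on (fobj \<theta> \<beta> g h m T (s + int \<delta>) (a + \<delta>)) {s + int \<delta> + 1..T + 1} t"
proof (rule is_minimizer_on_affine_subset)
  show "is_minimizer_on (fobj \<theta> \<beta> g h m T s a) {s + 1..T + 1} t"
    by fact
  show "{s + int \<delta> + 1..T + 1} \<subseteq> {s + 1..T + 1}" "t \<in> {s + int \<delta> + 1..T + 1}"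
    using assms by auto
  show "survA \<theta> \<beta> a \<delta> > 0"
    unfolding survA_def by simp
  show "fobj \<theta> \<beta> g h m T s a y =
      survA \<theta> \<beta> a \<delta> * fobj \<theta> \<beta> g h m T (s + int \<delta>) (a + \<delta>) y
      + (\<Sum>k<Suc \<delta>. pmfA \<theta> \<beta> a k * (g + real_of_int (T - (s + int k)) * cconst \<theta> \<beta> g h m))"
    if "y \<in> {s + int \<delta> + 1..T + 1}" for y
    using assms that by (intro fobj_eq_survA_mult_fobj_shift) auto
qed

end
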